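(* Let $M$ be a real $m\times n$ matrix and let $\Lambda_1\geq\dotsb\geq\Lambda_n\geq 0$ be its singular values, i.e. $\Lambda_1^2\geq\dotsb\geq\Lambda_n^2$ are the eigenvalues of $M^TM$. (If $M$ is symmetric, the $\Lambda_i$ are the absolute values of its eigenvalues.) Let $k\leq\min(m,n)$ be a positive integer and let $\vec{\Delta}^{(k)}$ be the vector of all $k\times k$ minors of $M$, arranged in some order. Then, with all implied constants depending only on $m$ and $n$: (i) $\|\vec{\Delta}^{(k)}\|\asymp\Lambda_1\cdots\Lambda_k$, i.e. there are constants $a,A>0$ depending only on $m,n$ with $a\Lambda_1\cdots\Lambda_k\leq\|\vec{\Delta}^{(k)}\|\leq A\Lambda_1\cdots\Lambda_k$. (ii) There is a $k$-dimensional linear subspace $V\subset\mathbb{R}^n$, spanned by $k$ standard basis vectors of $\mathbb{R}^n$, such that $\|M\vec{v}\|\geq a'\|\vec{v}\|\Lambda_k$ for all $\vec{v}\in V$, where $a'>0$ depends only on $m,n$. (iii) There is a constant $a''>0$ depending only on $m,n$ such that for every $C\geq 1$, either there is an $(n-k+1)$-dimensional linear subspace $X\subset\mathbb{R}^n$ with $\|M\vec{X}\|\leq C^{-1}\|\vec{X}\|$ for all $\vec{X}\in X$, or there is a $k$-dimensional linear subspace $V\subset\mathbb{R}^n$, spanned by standard basis vectors of $\mathbb{R}^n$, with $\|M\vec{v}\|\geq a''C^{-1}\|\vec{v}\|$ for all $\vec{v}\in V$.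
   Context: $\|\cdot\|$ denotes the supremum (maximum absolute value of coordinates) norm. *)

theory Defs
  imports "Jordan_Normal_Form.Char_Poly" "Jordan_Normal_Form.VS_Connect"
    "Jordan_Normal_Form.DL_Rank_Submatrix"
begin

definition sup_norm :: "real vec \<Rightarrow> real" where
  "sup_norm v = Max (insert 0 {\<bar>v $ i\<bar> | i. i < dim_vec v})"

definition singular_values :: "real mat \<Rightarrow> real list \<Rightarrow> bool" where
  "singular_values M ls \<longleftrightarrow>
     length ls = dim_col M \<and> sorted_wrt (\<ge>) ls \<and> (\<forall>l\<in>set ls. l \<ge> 0) \<and>
     char_poly (transpose_mat M * M) = (\<Prod>l\<leftarrow>ls. [:- (l^2), 1:])"

text \<open>Sup norm of the vector of all k x k minors of M (the order is irrelevant).\<close>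
definition minors_norm :: "real mat \<Rightarrow> nat \<Rightarrow> real" where
  "minors_norm M k = Max {\<bar>det (submatrix M I J)\<bar> | I J.
       I \<subseteq> {..<dim_row M} \<and> card I = k \<and> J \<subseteq> {..<dim_col M} \<and> card J = k}"

definition subspace_dim :: "nat \<Rightarrow> nat \<Rightarrow> real vec set \<Rightarrow> bool" where
  "subspace_dim n d X \<longleftrightarrow> subspace class_ring X (module_vec TYPE(real) n) \<and>
     vectorspace.dim class_ring ((module_vec TYPE(real) n)\<lparr>carrier := X\<rparr>) = d"

definition coord_span :: "nat \<Rightarrow> nat set \<Rightarrow> real vec set" where
  "coord_span n J = {v \<in> carrier_vec n. \<forall>j<n. j \<notin> J \<longrightarrow> v $ j = 0}"

end

theory Submission
  imports Defs "Jordan_Normal_Form.Schur_Decomposition"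
begin

text \<open>Diagonalising \<open>M\<^sup>T M\<close> by an orthogonal matrix \<open>U\<close>, the matrix \<open>N = M U\<close> has orthogonal
  columns of lengths \<open>\<Lambda>\<^sub>1 \<ge> \<dots> \<ge> \<Lambda>\<^sub>n\<close> and \<open>M = N U\<^sup>T\<close>. Expanding a \<open>k \<times> k\<close> minor of \<open>M\<close>
  multilinearly in its columns writes it as a combination, with coefficients bounded by \<open>1\<close>,
  of \<open>k \<times> k\<close> minors of \<open>N\<close>, each at most \<open>k! \<Lambda>\<^sub>1 \<cdots> \<Lambda>\<^sub>k\<close>. Conversely, the first \<open>k\<close>
  normalised columns of \<open>N\<close> are orthonormal, and expanding the determinant \<open>1\<close> of their Gram
  matrix, and then the resulting minor of \<open>N\<close> in terms of \<open>M\<close>, produces a \<open>k \<times> k\<close> minor of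
  \<open>M\<close> of size \<open>\<gtrsim> \<Lambda>\<^sub>1 \<cdots> \<Lambda>\<^sub>k\<close>. For (ii) apply Cramer's rule to a maximal
  \<open>k \<times> k\<close> minor, whose cofactors are \<open>(k - 1)\<close>-minors. For (iii), either \<open>\<Lambda>\<^sub>k \<lesssim> 1 / C\<close>
  and \<open>M\<close> contracts the span of the last \<open>n - k + 1\<close> columns of \<open>U\<close>, or (ii) applies.\<close>

section \<open>Multilinear expansion of determinants\<close>

lemma det_mat_by_cols:
  "det (mat k k F) = (\<Sum>p | p permutes {0..<k}. signof p * (\<Prod>j<k. F (p j, j)))"
  by (subst det_col[of _ k], auto intro!: sum.cong prod.cong)

lemma det_mat_sum_cols:
  fixes c Y :: "nat \<Rightarrow> nat \<Rightarrow> 'a :: comm_ring_1"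
  assumes "finite T"
  shows "det (mat k k (\<lambda>(i,j). \<Sum>t\<in>T. c j t * Y i t)) =
    (\<Sum>f\<in>{..<k} \<rightarrow>\<^sub>E T. (\<Prod>j<k. c j (f j)) * det (mat k k (\<lambda>(i,j). Y i (f j))))"
proof -
  let ?P = "{p. p permutes {0..<k}}"
  have "det (mat k k (\<lambda>(i,j). \<Sum>t\<in>T. c j t * Y i t)) =
     (\<Sum>p\<in>?P. signof p * (\<Prod>j<k. \<Sum>t\<in>T. c j t * Y (p j) t))"
    by (simp add: det_mat_by_cols)
  also have "\<dots> = (\<Sum>p\<in>?P. signof p * (\<Sum>f\<in>{..<k} \<rightarrow>\<^sub>E T. \<Prod>j<k. c j (f j) * Y (p j) (f j)))"
    by (rule sum.cong[OF refl], subst prod_sum_PiE, use assms in auto)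
  also have "\<dots> = (\<Sum>f\<in>{..<k} \<rightarrow>\<^sub>E T. \<Sum>p\<in>?P. (\<Prod>j<k. c j (f j)) * (signof p * (\<Prod>j<k. Y (p j) (f j))))"
    by (subst sum.swap) (simp add: sum_distrib_left prod.distrib mult_ac)
  also have "\<dots> = (\<Sum>f\<in>{..<k} \<rightarrow>\<^sub>E T. (\<Prod>j<k. c j (f j)) * det (mat k k (\<lambda>(i,j). Y i (f j))))"
    by (simp add: det_mat_by_cols sum_distrib_left)
  finally show ?thesis .
qed

lemma det_mat_eq_0_if_not_inj_cols:
  assumes "\<not> inj_on f {..<k}"
  shows "det (mat k k (\<lambda>(i,j). Y i (f j))) = 0"
proof -
  from assms obtain a b where "a < k" "b < k" "a \<noteq> b" "f a = f b"
    unfolding inj_on_def by auto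
  then show ?thesis by (intro det_identical_columns[of _ k a b]) auto
qed

lemma det_mat_eq_0_if_not_inj_rows:
  assumes "\<not> inj_on g {..<k}"
  shows "det (mat k k (\<lambda>(i,j). Y (g i) j)) = 0"
proof -
  from assms obtain a b where "a < k" "b < k" "a \<noteq> b" "g a = g b"
    unfolding inj_on_def by auto
  then show ?thesis by (intro det_identical_rows[of _ k a b]) auto
qed

lemma det_mat_scale_cols:
  fixes Y :: "nat \<Rightarrow> nat \<Rightarrow> real"
  shows "det (mat k k (\<lambda>(i,j). Y i j * d j)) = (\<Prod>j<k. d j) * det (mat k k (\<lambda>(i,j). Y i j))"
  by (simp add: det_mat_by_cols sum_distrib_left prod.distrib mult_ac)

lemma det_mat_swap_indices:
  fixes Y :: "nat \<Rightarrow> nat \<Rightarrow> real"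
  shows "det (mat k k (\<lambda>(i,j). Y j i)) = det (mat k k (\<lambda>(i,j). Y i j))"
proof -
  have "mat k k (\<lambda>(i,j). Y j i) = transpose_mat (mat k k (\<lambda>(i,j). Y i j))"
    by auto
  then show ?thesis using det_transpose[of "mat k k (\<lambda>(i,j). Y i j)" k] by simp
qed

lemma abs_det_mat_le_fact_prod:
  fixes F :: "nat \<times> nat \<Rightarrow> real"
  assumes "\<And>i j. i < k \<Longrightarrow> j < k \<Longrightarrow> \<bar>F (i,j)\<bar> \<le> b j"
  shows "\<bar>det (mat k k F)\<bar> \<le> fact k * (\<Prod>j<k. b j)"
proof -
  let ?P = "{p. p permutes {0..<k}}"
  have "\<bar>det (mat k k F)\<bar> \<le> (\<Sum>p\<in>?P. \<bar>signof p * (\<Prod>j<k. F (p j, j))\<bar>)"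
    unfolding det_mat_by_cols by (rule sum_abs)
  also have "\<dots> \<le> (\<Sum>p\<in>?P. \<Prod>j<k. b j)"
  proof (rule sum_mono)
    fix p assume "p \<in> ?P"
    then have "j < k \<Longrightarrow> p j < k" for j using permutes_in_image[of p "{0..<k}" j] by auto
    then have "(\<Prod>j<k. \<bar>F (p j, j)\<bar>) \<le> (\<Prod>j<k. b j)"
      by (intro prod_mono) (auto intro: assms)
    then show "\<bar>signof p * (\<Prod>j<k. F (p j, j))\<bar> \<le> (\<Prod>j<k. b j)"
      by (simp add: abs_mult abs_prod sign_def)
  qed
  also have "\<dots> = fact k * (\<Prod>j<k. b j)"
    using card_permutations[of "{0..<k}" k] by simp
  finally show ?thesis .
qed

lemma abs_sum_mult_le:
  fixes c d :: "'a \<Rightarrow> real" and B :: real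
  assumes "\<And>a. a \<in> A \<Longrightarrow> \<bar>c a\<bar> \<le> 1" and "\<And>a. a \<in> A \<Longrightarrow> \<bar>d a\<bar> \<le> B"
  shows "\<bar>\<Sum>a\<in>A. c a * d a\<bar> \<le> card A * B"
proof -
  have "\<bar>\<Sum>a\<in>A. c a * d a\<bar> \<le> (\<Sum>a\<in>A. \<bar>c a\<bar> * \<bar>d a\<bar>)"
    using sum_abs[of "\<lambda>a. c a * d a" A] by (simp add: abs_mult)
  also have "\<dots> \<le> (\<Sum>a\<in>A. 1 * B)"
    using assms by (intro sum_mono mult_mono) auto
  finally show ?thesis by simp
qed

lemma exists_abs_sum_mult_le:
  fixes c d :: "'a \<Rightarrow> real"
  assumes "finite A" "A \<noteq> {}" and "\<And>a. a \<in> A \<Longrightarrow> \<bar>c a\<bar> \<le> 1"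
  shows "\<exists>a\<in>A. \<bar>\<Sum>a\<in>A. c a * d a\<bar> \<le> card A * \<bar>d a\<bar>"
proof -
  let ?D = "Max ((\<lambda>a. \<bar>d a\<bar>) ` A)"
  have "?D \<in> (\<lambda>a. \<bar>d a\<bar>) ` A"
    using assms(1,2) by (intro Max_in) auto
  then obtain a where "a \<in> A" "?D = \<bar>d a\<bar>" by auto
  moreover have "\<bar>\<Sum>a\<in>A. c a * d a\<bar> \<le> card A * ?D"
    using assms by (intro abs_sum_mult_le) auto
  ultimately show ?thesis by auto
qed

lemma abs_det_mat_sum_cols_le:
  fixes c Y :: "nat \<Rightarrow> nat \<Rightarrow> real" and B :: real
  assumes c: "\<And>j t. j < k \<Longrightarrow> t < n \<Longrightarrow> \<bar>c j t\<bar> \<le> 1" and B: "0 \<le> B"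
    and Y: "\<And>f. f \<in> {..<k} \<rightarrow>\<^sub>E {..<n} \<Longrightarrow> inj_on f {..<k} \<Longrightarrow>
      \<bar>det (mat k k (\<lambda>(i,j). Y i (f j)))\<bar> \<le> B"
  shows "\<bar>det (mat k k (\<lambda>(i,j). \<Sum>t<n. c j t * Y i t))\<bar> \<le> real n ^ k * B"
proof -
  have "\<bar>det (mat k k (\<lambda>(i,j). \<Sum>t<n. c j t * Y i t))\<bar> =
    \<bar>\<Sum>f\<in>{..<k} \<rightarrow>\<^sub>E {..<n}. (\<Prod>j<k. c j (f j)) * det (mat k k (\<lambda>(i,j). Y i (f j)))\<bar>"
    by (subst det_mat_sum_cols) simp_all
  also have "\<dots> \<le> card ({..<k} \<rightarrow>\<^sub>E {..<n}) * B"
  proof (rule abs_sum_mult_le)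
    fix f assume f: "f \<in> {..<k} \<rightarrow>\<^sub>E {..<n}"
    show "\<bar>\<Prod>j<k. c j (f j)\<bar> \<le> 1"
      unfolding abs_prod by (rule prod_le_1) (use c f in auto)
    show "\<bar>det (mat k k (\<lambda>(i,j). Y i (f j)))\<bar> \<le> B"
      using Y[OF f] det_mat_eq_0_if_not_inj_cols[of f k Y] B by (cases "inj_on f {..<k}") simp_all
  qed
  also have "card ({..<k} \<rightarrow>\<^sub>E {..<n}) = n ^ k" by (simp add: card_PiE)
  finally show ?thesis by simp
qed

lemma exists_large_det_mat_sum_cols:
  fixes c Y :: "nat \<Rightarrow> nat \<Rightarrow> real"
  assumes c: "\<And>j t. j < k \<Longrightarrow> t < n \<Longrightarrow> \<bar>c j t\<bar> \<le> 1"
    and nz: "det (mat k k (\<lambda>(i,j). \<Sum>t<n. c j t * Y i t)) \<noteq> 0"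
  shows "\<exists>f\<in>{..<k} \<rightarrow>\<^sub>E {..<n}. inj_on f {..<k} \<and>
    \<bar>det (mat k k (\<lambda>(i,j). \<Sum>t<n. c j t * Y i t))\<bar> \<le> real n ^ k * \<bar>det (mat k k (\<lambda>(i,j). Y i (f j)))\<bar>"
proof -
  let ?F = "{..<k} \<rightarrow>\<^sub>E {..<n}" and ?d = "\<lambda>f. det (mat k k (\<lambda>(i,j). Y i (f j)))"
  have sum: "det (mat k k (\<lambda>(i,j). \<Sum>t<n. c j t * Y i t)) = (\<Sum>f\<in>?F. (\<Prod>j<k. c j (f j)) * ?d f)"
    by (subst det_mat_sum_cols) simp_all
  have fin: "finite ?F" by (simp add: finite_PiE)
  have ne: "?F \<noteq> {}" using nz unfolding sum by auto
  have coeff: "\<bar>\<Prod>j<k. c j (f j)\<bar> \<le> 1" if "f \<in> ?F" for f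
    unfolding abs_prod by (rule prod_le_1) (use c that in auto)
  obtain f where f: "f \<in> ?F" and big: "\<bar>\<Sum>f\<in>?F. (\<Prod>j<k. c j (f j)) * ?d f\<bar> \<le> card ?F * \<bar>?d f\<bar>"
    using exists_abs_sum_mult_le[of ?F "\<lambda>f. \<Prod>j<k. c j (f j)" ?d, OF fin ne coeff] by blast
  have "card ?F = n ^ k" by (simp add: card_PiE)
  with big have big': "\<bar>det (mat k k (\<lambda>(i,j). \<Sum>t<n. c j t * Y i t))\<bar> \<le> real n ^ k * \<bar>?d f\<bar>"
    by (simp only: sum of_nat_power)
  have "?d f \<noteq> 0"
  proof
    assume "?d f = 0"
    with big' nz show False by simp
  qed
  then have "inj_on f {..<k}" using det_mat_eq_0_if_not_inj_cols by blast
  with f big' show ?thesis by blast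
qed

section \<open>Orthonormal matrices and real symmetric matrices\<close>

lemma orthonormal_col_scalar_prod:
  fixes U :: "real mat"
  assumes U: "U \<in> carrier_mat n n" and UU: "transpose_mat U * U = 1\<^sub>m n"
    and i: "i < n" and j: "j < n"
  shows "col U i \<bullet> col U j = (if i = j then 1 else 0)"
proof -
  have "(transpose_mat U * U) $$ (i,j) = col U i \<bullet> col U j"
    using U i j by simp
  then show ?thesis using UU i j by simp
qed

lemma orthonormal_mat_right_inverse:
  fixes U :: "real mat"
  assumes "U \<in> carrier_mat n n" "transpose_mat U * U = 1\<^sub>m n"
  shows "U * transpose_mat U = 1\<^sub>m n"
  using mat_mult_left_right_inverse[of "transpose_mat U" n U] assms by simp

lemma orthonormal_mat_of_cols:
  fixes ws :: "real vec list"
  assumes ws: "set ws \<subseteq> carrier_vec n" "length ws = n"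
    and orth: "\<And>i j. i < n \<Longrightarrow> j < n \<Longrightarrow> ws ! i \<bullet> ws ! j = (if i = j then 1 else 0)"
  shows "transpose_mat (mat_of_cols n ws) * mat_of_cols n ws = 1\<^sub>m n"
proof (rule eq_matI)
  fix i j assume "i < dim_row (1\<^sub>m n)" "j < dim_col (1\<^sub>m n)"
  then have "i < n" "j < n" by auto
  moreover have "ws ! i \<in> carrier_vec n" "ws ! j \<in> carrier_vec n"
    using ws \<open>i < n\<close> \<open>j < n\<close> nth_mem by blast+
  ultimately show "(transpose_mat (mat_of_cols n ws) * mat_of_cols n ws) $$ (i, j) = 1\<^sub>m n $$ (i, j)"
    using ws orth by simp
qed (use ws in auto)

lemma orthonormal_mat_of_corthogonal:
  fixes ws :: "real vec list"
  assumes ws: "set ws \<subseteq> carrier_vec n" "corthogonal ws" "length ws = n"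
  defines "W \<equiv> mat_of_cols n (map (\<lambda>w. (1 / sqrt (w \<bullet> w)) \<cdot>\<^sub>v w) ws)"
  shows "W \<in> carrier_mat n n" and "transpose_mat W * W = 1\<^sub>m n"
    and "\<And>i. i < n \<Longrightarrow> col W i = (1 / sqrt (ws ! i \<bullet> ws ! i)) \<cdot>\<^sub>v ws ! i"
proof -
  define us where "us = map (\<lambda>w. (1 / sqrt (w \<bullet> w)) \<cdot>\<^sub>v w) ws"
  have wsi: "i < n \<Longrightarrow> ws ! i \<in> carrier_vec n" for i using ws(1,3) nth_mem by blast
  have orth: "i < n \<Longrightarrow> j < n \<Longrightarrow> (ws ! i \<bullet> ws ! j = 0) = (i \<noteq> j)" for i j
    using ws(2,3) unfolding corthogonal_def scalar_prod_def by (simp add: conjugate_real_def)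
  have pos: "ws ! i \<bullet> ws ! i > 0" if "i < n" for i
  proof -
    have "ws ! i \<bullet> ws ! i \<ge> 0" unfolding scalar_prod_def by (rule sum_nonneg) auto
    with orth[OF that that] show ?thesis by auto
  qed
  have us: "set us \<subseteq> carrier_vec n" "length us = n" using ws unfolding us_def by auto
  have usi: "i < n \<Longrightarrow> us ! i = (1 / sqrt (ws ! i \<bullet> ws ! i)) \<cdot>\<^sub>v ws ! i" for i
    using ws(3) unfolding us_def by simp
  have us_orth: "us ! i \<bullet> us ! j = (if i = j then 1 else 0)" if i: "i < n" and j: "j < n" for i j
  proof -
    have "us ! i \<bullet> us ! j = (1 / sqrt (ws ! i \<bullet> ws ! i)) * (1 / sqrt (ws ! j \<bullet> ws ! j)) * (ws ! i \<bullet> ws ! j)"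
      using usi[OF i] usi[OF j] wsi[OF i] wsi[OF j] by (simp add: mult_ac)
    also have "\<dots> = (if i = j then 1 else 0)"
    proof (cases "i = j")
      case True
      with pos[OF i] show ?thesis by (simp add: field_simps real_sqrt_mult[symmetric])
    qed (use orth[OF i j] in simp)
    finally show ?thesis .
  qed
  show "W \<in> carrier_mat n n" unfolding W_def using us(2) by (auto simp: us_def)
  show "transpose_mat W * W = 1\<^sub>m n"
    unfolding W_def us_def[symmetric] by (rule orthonormal_mat_of_cols[OF us us_orth])
  show "col W i = (1 / sqrt (ws ! i \<bullet> ws ! i)) \<cdot>\<^sub>v ws ! i" if "i < n" for i
    unfolding W_def us_def[symmetric] using us that usi[OF that] wsi[OF that] by (subst col_mat_of_cols) auto
qed

lemma exists_orthonormal_mat_first_col: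
  fixes v :: "real vec"
  assumes v: "v \<in> carrier_vec n" and v0: "v \<noteq> 0\<^sub>v n"
  shows "\<exists>W c. W \<in> carrier_mat n n \<and> transpose_mat W * W = 1\<^sub>m n \<and> col W 0 = c \<cdot>\<^sub>v v"
proof -
  interpret cof_vec_space n "TYPE(real)" .
  have n: "0 < n" using v v0 by (cases n) auto
  define b where "b = basis_completion v"
  define ws where "ws = gram_schmidt n b"
  from basis_completion[OF v v0, folded b_def]
  have "distinct b" "\<not> lin_dep (set b)" "set b \<subseteq> carrier_vec n" "hd b = v" "length b = n"
    by auto
  moreover from this n obtain vs where "b = v # vs" by (cases b) auto
  ultimately have ws: "set ws \<subseteq> carrier_vec n" "corthogonal ws" "length ws = n" and "hd ws = v"
    using gram_schmidt_result[of b ws] gram_schmidt_hd[OF v, of vs] unfolding ws_def by auto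
  then have "ws ! 0 = v" using n by (cases ws) auto
  then show ?thesis using orthonormal_mat_of_corthogonal[OF ws] n by blast
qed

lemma index_conj_mat:
  fixes W G :: "real mat"
  assumes W: "W \<in> carrier_mat n n'" and G: "G \<in> carrier_mat n n" and i: "i < n'" and j: "j < n'"
  shows "(transpose_mat W * G * W) $$ (i, j) = col W i \<bullet> (G *\<^sub>v col W j)"
proof -
  have "transpose_mat W * G * W = transpose_mat W * (G * W)"
    using W G by (intro assoc_mult_mat[of _ n' n _ n _ n']) auto
  also have "\<dots> $$ (i, j) = row (transpose_mat W) i \<bullet> col (G * W) j"
    using W G i j by (intro index_mult_mat(1)) auto
  also have "row (transpose_mat W) i = col W i" using W i by (intro row_transpose) auto
  also have "col (G * W) j = G *\<^sub>v col W j" using W G j by (intro col_mult2) auto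
  finally show ?thesis .
qed

lemma transpose_conj_mat:
  fixes W G :: "real mat"
  assumes W: "W \<in> carrier_mat n n'" and G: "G \<in> carrier_mat n n"
  shows "transpose_mat (transpose_mat W * G * W) = transpose_mat W * transpose_mat G * W"
proof -
  have "transpose_mat (transpose_mat W * G * W) = transpose_mat W * transpose_mat (transpose_mat W * G)"
    using W G by (intro transpose_mult[of _ n' n _ n']) auto
  also have "transpose_mat (transpose_mat W * G) = transpose_mat G * W"
    using W G by (subst transpose_mult[of _ n' n _ n]) auto
  finally show ?thesis using W G by (simp add: assoc_mult_mat[of _ n' n _ n _ n'])
qed

lemma transpose_mult_conj_mat:
  fixes W F G :: "real mat"
  assumes W: "W \<in> carrier_mat n n'" and F: "F \<in> carrier_mat n' n''" and G: "G \<in> carrier_mat n n"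
  shows "transpose_mat (W * F) * G * (W * F) = transpose_mat F * (transpose_mat W * G * W) * F"
proof -
  have WT: "transpose_mat W \<in> carrier_mat n' n" and FT: "transpose_mat F \<in> carrier_mat n'' n'"
    using W F by auto
  have WTG: "transpose_mat W * G \<in> carrier_mat n' n" using WT G by (rule mult_carrier_mat)
  have WTGW: "transpose_mat W * G * W \<in> carrier_mat n' n'" using WTG W by (rule mult_carrier_mat)
  have WF: "W * F \<in> carrier_mat n n''" using W F by (rule mult_carrier_mat)
  have "transpose_mat (W * F) * G * (W * F) = transpose_mat F * transpose_mat W * G * (W * F)"
    by (simp only: transpose_mult[OF W F])
  also have "\<dots> = transpose_mat F * (transpose_mat W * G) * (W * F)"
    by (simp only: assoc_mult_mat[OF FT WT G])
  also have "\<dots> = transpose_mat F * (transpose_mat W * G * (W * F))"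
    by (rule assoc_mult_mat[OF FT WTG WF])
  also have "transpose_mat W * G * (W * F) = transpose_mat W * G * W * F"
    by (rule assoc_mult_mat[OF WTG W F, symmetric])
  also have "transpose_mat F * (transpose_mat W * G * W * F) = transpose_mat F * (transpose_mat W * G * W) * F"
    by (rule assoc_mult_mat[OF FT WTGW F, symmetric])
  finally show ?thesis .
qed

lemma orthonormal_mat_mult:
  fixes W F :: "real mat"
  assumes W: "W \<in> carrier_mat n n" "transpose_mat W * W = 1\<^sub>m n"
    and F: "F \<in> carrier_mat n n" "transpose_mat F * F = 1\<^sub>m n"
  shows "transpose_mat (W * F) * (W * F) = 1\<^sub>m n"
proof -
  have "transpose_mat (W * F) * (W * F) = transpose_mat F * (transpose_mat W * 1\<^sub>m n * W) * F"
    using transpose_mult_conj_mat[OF W(1) F(1), of "1\<^sub>m n"] W F by simp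
  also have "\<dots> = 1\<^sub>m n" using W F by simp
  finally show ?thesis .
qed

lemma symmetric_first_col_four_block:
  fixes A :: "real mat"
  assumes A: "A \<in> carrier_mat (Suc n) (Suc n)" and sym: "transpose_mat A = A"
    and col0: "\<And>i. i < Suc n \<Longrightarrow> A $$ (i,0) = (if i = 0 then e else 0)"
  defines "B \<equiv> mat n n (\<lambda>(i,j). A $$ (Suc i, Suc j))"
  shows "A = four_block_mat (mat 1 1 (\<lambda>_. e)) (0\<^sub>m 1 n) (0\<^sub>m n 1) B" and "transpose_mat B = B"
proof -
  have swap: "A $$ (i, j) = A $$ (j, i)" if "i < Suc n" "j < Suc n" for i j
  proof -
    have "A $$ (i, j) = transpose_mat A $$ (j, i)" using A that by simp
    then show ?thesis unfolding sym .
  qed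
  show "A = four_block_mat (mat 1 1 (\<lambda>_. e)) (0\<^sub>m 1 n) (0\<^sub>m n 1) B"
  proof (rule eq_matI)
    fix i j assume "i < dim_row (four_block_mat (mat 1 1 (\<lambda>_. e)) (0\<^sub>m 1 n) (0\<^sub>m n 1) B)"
      and "j < dim_col (four_block_mat (mat 1 1 (\<lambda>_. e)) (0\<^sub>m 1 n) (0\<^sub>m n 1) B)"
    then have i: "i < Suc n" and j: "j < Suc n" by (auto simp: B_def)
    show "A $$ (i, j) = four_block_mat (mat 1 1 (\<lambda>_. e)) (0\<^sub>m 1 n) (0\<^sub>m n 1) B $$ (i, j)"
      using col0[OF i] col0[OF j] swap[OF i j] i j by (cases i; cases j) (auto simp: B_def)
  qed (use A in \<open>auto simp: B_def\<close>)
  show "transpose_mat B = B"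
    using swap by (auto simp: B_def)
qed

lemma mult_four_block_diag_mat:
  fixes A B X Y :: "real mat"
  assumes "A \<in> carrier_mat 1 1" "B \<in> carrier_mat 1 1" "X \<in> carrier_mat n n" "Y \<in> carrier_mat n n"
  shows "four_block_mat A (0\<^sub>m 1 n) (0\<^sub>m n 1) X * four_block_mat B (0\<^sub>m 1 n) (0\<^sub>m n 1) Y
     = four_block_mat (A * B) (0\<^sub>m 1 n) (0\<^sub>m n 1) (X * Y)"
proof -
  have "four_block_mat A (0\<^sub>m 1 n) (0\<^sub>m n 1) X * four_block_mat B (0\<^sub>m 1 n) (0\<^sub>m n 1) Y =
    four_block_mat (A * B + 0\<^sub>m 1 n * 0\<^sub>m n 1) (A * 0\<^sub>m 1 n + 0\<^sub>m 1 n * Y)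
      (0\<^sub>m n 1 * B + X * 0\<^sub>m n 1) (0\<^sub>m n 1 * 0\<^sub>m 1 n + X * Y)"
    using assms by (intro mult_four_block_mat) auto
  also have "\<dots> = four_block_mat (A * B) (0\<^sub>m 1 n) (0\<^sub>m n 1) (X * Y)"
    using assms by (intro cong_four_block_mat) auto
  finally show ?thesis .
qed

lemma orthonormal_four_block_one:
  fixes U' B :: "real mat"
  assumes U': "U' \<in> carrier_mat n n" "transpose_mat U' * U' = 1\<^sub>m n" and B: "B \<in> carrier_mat n n"
  defines "F \<equiv> four_block_mat (1\<^sub>m 1) (0\<^sub>m 1 n) (0\<^sub>m n 1) U'"
  shows "F \<in> carrier_mat (Suc n) (Suc n)" and "transpose_mat F * F = 1\<^sub>m (Suc n)"
    and "transpose_mat F * four_block_mat (mat 1 1 (\<lambda>_. e)) (0\<^sub>m 1 n) (0\<^sub>m n 1) B * F =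
      four_block_mat (mat 1 1 (\<lambda>_. e)) (0\<^sub>m 1 n) (0\<^sub>m n 1) (transpose_mat U' * B * U')"
proof -
  show "F \<in> carrier_mat (Suc n) (Suc n)" unfolding F_def using U' by auto
  have FT: "transpose_mat F = four_block_mat (1\<^sub>m 1) (0\<^sub>m 1 n) (0\<^sub>m n 1) (transpose_mat U')"
    unfolding F_def using U' by (subst transpose_four_block_mat) auto
  have "transpose_mat F * F = four_block_mat (1\<^sub>m 1 * 1\<^sub>m 1) (0\<^sub>m 1 n) (0\<^sub>m n 1) (transpose_mat U' * U')"
    unfolding FT unfolding F_def using U' by (intro mult_four_block_diag_mat) auto
  then show "transpose_mat F * F = 1\<^sub>m (Suc n)" using U' by simp
  have "transpose_mat F * four_block_mat (mat 1 1 (\<lambda>_. e)) (0\<^sub>m 1 n) (0\<^sub>m n 1) B =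
    four_block_mat (1\<^sub>m 1 * mat 1 1 (\<lambda>_. e)) (0\<^sub>m 1 n) (0\<^sub>m n 1) (transpose_mat U' * B)"
    unfolding FT using U' B by (intro mult_four_block_diag_mat) auto
  also have "\<dots> * F = four_block_mat (1\<^sub>m 1 * mat 1 1 (\<lambda>_. e) * 1\<^sub>m 1) (0\<^sub>m 1 n) (0\<^sub>m n 1) (transpose_mat U' * B * U')"
    unfolding F_def using U' B by (intro mult_four_block_diag_mat) auto
  finally show "transpose_mat F * four_block_mat (mat 1 1 (\<lambda>_. e)) (0\<^sub>m 1 n) (0\<^sub>m n 1) B * F =
      four_block_mat (mat 1 1 (\<lambda>_. e)) (0\<^sub>m 1 n) (0\<^sub>m n 1) (transpose_mat U' * B * U')"
    by simp
qed

lemma symmetric_mat_eigenvector_deflation: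
  fixes G :: "real mat"
  assumes G: "G \<in> carrier_mat (Suc n) (Suc n)" and sym: "transpose_mat G = G"
    and v: "v \<in> carrier_vec (Suc n)" "v \<noteq> 0\<^sub>v (Suc n)" "G *\<^sub>v v = e \<cdot>\<^sub>v v"
  shows "\<exists>W B. W \<in> carrier_mat (Suc n) (Suc n) \<and> transpose_mat W * W = 1\<^sub>m (Suc n) \<and>
    B \<in> carrier_mat n n \<and> transpose_mat B = B \<and>
    transpose_mat W * G * W = four_block_mat (mat 1 1 (\<lambda>_. e)) (0\<^sub>m 1 n) (0\<^sub>m n 1) B"
proof -
  obtain W c where W: "W \<in> carrier_mat (Suc n) (Suc n)" "transpose_mat W * W = 1\<^sub>m (Suc n)"
    and w0: "col W 0 = c \<cdot>\<^sub>v v"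
    using exists_orthonormal_mat_first_col[OF v(1,2)] by blast
  have Gw: "G *\<^sub>v col W 0 = e \<cdot>\<^sub>v col W 0"
    unfolding w0 using G v by (simp add: mult_mat_vec smult_smult_assoc mult.commute)
  define A where "A = transpose_mat W * G * W"
  have A: "A \<in> carrier_mat (Suc n) (Suc n)" using W G by (auto simp: A_def)
  have Asym: "transpose_mat A = A" unfolding A_def using transpose_conj_mat[OF W(1) G] sym by simp
  have Acol: "A $$ (i, 0) = (if i = 0 then e else 0)" if "i < Suc n" for i
  proof -
    have "A $$ (i, 0) = col W i \<bullet> (e \<cdot>\<^sub>v col W 0)"
      unfolding A_def using index_conj_mat[OF W(1) G] that Gw by simp
    also have "\<dots> = e * (col W i \<bullet> col W 0)" using W that by simp
    finally show ?thesis using orthonormal_col_scalar_prod[OF W] that by simp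
  qed
  show ?thesis
    using symmetric_first_col_four_block[OF A Asym Acol] W unfolding A_def
    by (intro exI[of _ W] exI[of _ "mat n n (\<lambda>(i,j). A $$ (Suc i, Suc j))"]) (auto simp: A_def)
qed

theorem symmetric_mat_orthonormal_diagonalization:
  fixes G :: "real mat"
  assumes "G \<in> carrier_mat n n" "transpose_mat G = G" "char_poly G = (\<Prod>e\<leftarrow>es. [:- e, 1:])"
  shows "\<exists>U. U \<in> carrier_mat n n \<and> transpose_mat U * U = 1\<^sub>m n \<and>
    transpose_mat U * G * U = mat_diag n (\<lambda>i. es ! i)"
  using assms
proof (induction es arbitrary: n G)
  case Nil
  then have "n = 0" using degree_monic_char_poly[of G n] by auto
  then show ?case by (intro exI[of _ "1\<^sub>m 0"]) (auto simp: mat_diag_def)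
next
  case (Cons e es n G)
  then have G: "G \<in> carrier_mat n n" and sym: "transpose_mat G = G"
    and cp: "char_poly G = [:-e, 1:] * (\<Prod>e\<leftarrow>es. [:- e, 1:])" by auto
  have "eigenvalue G e" unfolding eigenvalue_root_char_poly[OF G] cp by simp
  then obtain v where v: "v \<in> carrier_vec n" "v \<noteq> 0\<^sub>v n" "G *\<^sub>v v = e \<cdot>\<^sub>v v"
    using G unfolding eigenvalue_def eigenvector_def by auto
  then obtain n1 where n: "n = Suc n1" by (cases n) auto
  obtain W B where W: "W \<in> carrier_mat n n" "transpose_mat W * W = 1\<^sub>m n"
    and B: "B \<in> carrier_mat n1 n1" "transpose_mat B = B"
    and WGW: "transpose_mat W * G * W = four_block_mat (mat 1 1 (\<lambda>_. e)) (0\<^sub>m 1 n1) (0\<^sub>m n1 1) B"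
    using symmetric_mat_eigenvector_deflation[OF G[unfolded n] sym v[unfolded n]] n by blast
  have "similar_mat (transpose_mat W * G * W) G"
    unfolding similar_mat_def similar_mat_wit_def
    using W G orthonormal_mat_right_inverse[OF W]
    by (intro exI[of _ "transpose_mat W"] exI[of _ W]) (auto simp: Let_def)
  then have "char_poly G = char_poly (four_block_mat (mat 1 1 (\<lambda>_. e)) (0\<^sub>m 1 n1) (0\<^sub>m n1 1) B)"
    unfolding WGW by (rule char_poly_similar[symmetric])
  also have "\<dots> = [:-e, 1:] * char_poly B"
    using B by (subst char_poly_four_block_zeros_col) (auto simp: char_poly_defs det_def sign_def)
  finally have "char_poly B = (\<Prod>e\<leftarrow>es. [:- e, 1:])"
    unfolding cp by (metis mult_cancel_left pCons_eq_0_iff zero_neq_one)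
  then obtain U' where U': "U' \<in> carrier_mat n1 n1" "transpose_mat U' * U' = 1\<^sub>m n1"
    and U'B: "transpose_mat U' * B * U' = mat_diag n1 (\<lambda>i. es ! i)"
    using Cons.IH[of B n1] B by auto
  define F where "F = four_block_mat (1\<^sub>m 1) (0\<^sub>m 1 n1) (0\<^sub>m n1 1) U'"
  note F = orthonormal_four_block_one[OF U' B(1), folded F_def, unfolded n[symmetric]]
  have "transpose_mat (W * F) * G * (W * F) = transpose_mat F * (transpose_mat W * G * W) * F"
    by (rule transpose_mult_conj_mat[OF W(1) F(1) G])
  also have "\<dots> = mat_diag n (\<lambda>i. (e # es) ! i)"
    unfolding WGW F(3) U'B n by (rule eq_matI) (auto simp: mat_diag_def)
  finally show ?case using W F orthonormal_mat_mult[OF W F(1,2)] by (intro exI[of _ "W * F"]) auto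
qed

lemma inj_on_orthonormal_cols:
  fixes U :: "real mat"
  assumes U: "U \<in> carrier_mat n n" and UU: "transpose_mat U * U = 1\<^sub>m n"
  shows "inj_on (col U) {..<n}"
proof (rule inj_onI)
  fix i j assume "i \<in> {..<n}" "j \<in> {..<n}" "col U i = col U j"
  then show "i = j" using orthonormal_col_scalar_prod[OF U UU, of i i] orthonormal_col_scalar_prod[OF U UU, of i j]
    by (auto split: if_splits)
qed

lemma orthonormal_cols_lin_indpt:
  fixes U :: "real mat"
  assumes U: "U \<in> carrier_mat n n" and UU: "transpose_mat U * U = 1\<^sub>m n" and T: "T \<subseteq> {..<n}"
  shows "\<not> module.lin_dep class_ring (module_vec TYPE(real) n) (col U ` T)"
proof -
  interpret vec_space "TYPE(real)" n .
  have "det U * det U = 1"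
    using arg_cong[OF UU, of det] U by (simp add: det_mult[of _ n] det_transpose)
  then have "rank U = n" using det_rank_iff[OF U] by auto
  moreover have "distinct (cols U)"
    unfolding cols_def using U inj_on_orthonormal_cols[OF U UU] by (simp add: distinct_map atLeast0LessThan)
  ultimately have "lin_indpt (set (cols U))" by (rule full_rank_lin_indpt[OF U])
  moreover have "col U ` T \<subseteq> set (cols U)" using U T by (auto simp: cols_def)
  ultimately show ?thesis using subset_li_is_li by blast
qed

lemma orthonormal_cols_span_subspace_dim:
  fixes U :: "real mat"
  assumes U: "U \<in> carrier_mat n n" and UU: "transpose_mat U * U = 1\<^sub>m n" and T: "T \<subseteq> {..<n}"
  shows "\<exists>X. subspace_dim n (card T) X \<and>
     (\<forall>x\<in>X. x \<in> carrier_vec n \<and> (\<forall>t<n. t \<notin> T \<longrightarrow> col U t \<bullet> x = 0))"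
proof -
  interpret vec_space "TYPE(real)" n .
  define S where "S = col U ` T"
  have Sc: "S \<subseteq> carrier_vec n" unfolding S_def using U by auto
  have finS: "finite S" unfolding S_def using T finite_subset by blast
  have "card S = card T" unfolding S_def
    by (rule card_image, rule inj_on_subset[OF inj_on_orthonormal_cols[OF U UU] T])
  moreover have "maximal S (\<lambda>T. T \<subseteq> S \<and> lin_indpt T)"
    using orthonormal_cols_lin_indpt[OF U UU T] unfolding maximal_def S_def by auto
  ultimately have dim: "vectorspace.dim class_ring (span_vs S) = card T"
    using dim_span[OF Sc finS] by simp
  have perp: "col U t \<bullet> x = 0" if "t < n" "t \<notin> T" "x \<in> span S" for t x
  proof -
    have "col U t \<in> orthogonal_complement S"
      unfolding orthogonal_complement_def S_def
      using orthonormal_col_scalar_prod[OF U UU] U T that(1,2) by auto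
    then have "col U t \<in> orthogonal_complement (span S)"
      using in_orthogonal_complement_span[OF Sc] by simp
    then show ?thesis using that(3) unfolding orthogonal_complement_def by auto
  qed
  show ?thesis
    using span_is_subspace[OF Sc] dim perp span_closed[OF Sc]
    by (intro exI[of _ "span S"]) (auto simp: subspace_dim_def)
qed

section \<open>Sup norm, minors and Cramer's rule\<close>

lemma sup_norm_nonneg: "0 \<le> sup_norm v"
  unfolding sup_norm_def by (rule Max_ge) (auto simp: setcompr_eq_image)

lemma abs_le_sup_norm: "i < dim_vec v \<Longrightarrow> \<bar>v $ i\<bar> \<le> sup_norm v"
  unfolding sup_norm_def by (rule Max_ge) (auto simp: setcompr_eq_image)

lemma sup_norm_le: "0 \<le> c \<Longrightarrow> (\<And>i. i < dim_vec v \<Longrightarrow> \<bar>v $ i\<bar> \<le> c) \<Longrightarrow> sup_norm v \<le> c"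
  unfolding sup_norm_def by (subst Max_le_iff) (auto simp: setcompr_eq_image)

lemma sup_norm_attained: "sup_norm v = 0 \<or> (\<exists>i<dim_vec v. sup_norm v = \<bar>v $ i\<bar>)"
proof -
  have "sup_norm v \<in> insert 0 {\<bar>v $ i\<bar> | i. i < dim_vec v}"
    unfolding sup_norm_def by (rule Max_in) (auto simp: setcompr_eq_image)
  then show ?thesis by auto
qed

lemma abs_det_mult_sup_norm_le:
  fixes D :: "real mat"
  assumes D: "D \<in> carrier_mat k k" and w: "w \<in> carrier_vec k"
    and cof: "\<And>i j. i < k \<Longrightarrow> j < k \<Longrightarrow> \<bar>cofactor D i j\<bar> \<le> K"
  shows "\<bar>det D\<bar> * sup_norm w \<le> real k * K * sup_norm (D *\<^sub>v w)"
proof (cases "k = 0")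
  case True
  then show ?thesis using w sup_norm_le[of 0 w] sup_norm_nonneg[of w] by auto
next
  case False
  then have K: "0 \<le> K" using cof[of 0 0] by linarith
  have adj: "adj_mat D *\<^sub>v (D *\<^sub>v w) = det D \<cdot>\<^sub>v w"
  proof -
    have "adj_mat D *\<^sub>v (D *\<^sub>v w) = (adj_mat D * D) *\<^sub>v w"
      using adj_mat(1)[OF D] D w by (intro assoc_mult_mat_vec[symmetric]) auto
    also have "\<dots> = det D \<cdot>\<^sub>v w" using adj_mat(3)[OF D] w by auto
    finally show ?thesis .
  qed
  have "\<bar>det D\<bar> * \<bar>w $ j\<bar> \<le> real k * K * sup_norm (D *\<^sub>v w)" if j: "j < k" for j
  proof -
    have "det D * w $ j = (\<Sum>i<k. adj_mat D $$ (j,i) * (D *\<^sub>v w) $ i)"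
      using arg_cong[OF adj, of "\<lambda>x. x $ j"] adj_mat(1)[OF D] D w j
      by (simp add: scalar_prod_def lessThan_atLeast0)
    then have "\<bar>det D\<bar> * \<bar>w $ j\<bar> \<le> (\<Sum>i<k. \<bar>adj_mat D $$ (j,i)\<bar> * \<bar>(D *\<^sub>v w) $ i\<bar>)"
      by (simp add: abs_mult[symmetric] sum_abs[THEN order_trans])
    also have "\<dots> \<le> (\<Sum>i<k. K * sup_norm (D *\<^sub>v w))"
    proof (rule sum_mono)
      fix i assume i: "i \<in> {..<k}"
      have "\<bar>adj_mat D $$ (j,i)\<bar> \<le> K" using cof[of i j] D i j by (simp add: adj_mat_def)
      moreover have "\<bar>(D *\<^sub>v w) $ i\<bar> \<le> sup_norm (D *\<^sub>v w)" using D i by (intro abs_le_sup_norm) auto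
      ultimately show "\<bar>adj_mat D $$ (j,i)\<bar> * \<bar>(D *\<^sub>v w) $ i\<bar> \<le> K * sup_norm (D *\<^sub>v w)"
        using K by (intro mult_mono) auto
    qed
    finally show ?thesis by simp
  qed
  then show ?thesis
    using sup_norm_attained[of w] w K sup_norm_nonneg[of "D *\<^sub>v w"] by auto
qed

definition minor :: "real mat \<Rightarrow> nat \<Rightarrow> (nat \<Rightarrow> nat) \<Rightarrow> (nat \<Rightarrow> nat) \<Rightarrow> real" where
  "minor A k g f = det (mat k k (\<lambda>(i,j). A $$ (g i, f j)))"

lemma cofactor_mat_eq_minor:
  assumes "i < k" "j < k"
  shows "cofactor (mat k k (\<lambda>(a,b). A $$ (g a, f b))) i j =
    (-1) ^ (i + j) * minor A (k - 1) (\<lambda>a. g (if a < i then a else Suc a)) (\<lambda>b. f (if b < j then b else Suc b))"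
proof -
  have "mat_delete (mat k k (\<lambda>(a,b). A $$ (g a, f b))) i j =
    mat (k - 1) (k - 1) (\<lambda>(a,b). A $$ (g (if a < i then a else Suc a), f (if b < j then b else Suc b)))"
    using assms by (intro eq_matI) (auto simp: mat_delete_def)
  then show ?thesis by (simp add: cofactor_def minor_def)
qed

lemma pick_less: "I \<subseteq> {..<m} \<Longrightarrow> i < card I \<Longrightarrow> pick I i < m"
  using pick_in_set_le[of i I] by auto

lemma bij_betw_pick: "finite J \<Longrightarrow> bij_betw (pick J) {..<card J} J"
proof -
  assume fin: "finite J"
  have inj: "inj_on (pick J) {..<card J}"
    by (rule inj_onI) (metis lessThan_iff nat_neq_iff pick_mono_le)
  have "pick J ` {..<card J} \<subseteq> J" using pick_in_set_le by auto
  moreover have "card (pick J ` {..<card J}) = card J" using inj by (simp add: card_image)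
  ultimately have "pick J ` {..<card J} = J" using card_subset_eq[OF fin] by blast
  with inj show ?thesis by (simp add: bij_betw_def)
qed

lemma submatrix_eq_mat_pick:
  assumes M: "M \<in> carrier_mat m n" and I: "I \<subseteq> {..<m}" "card I = k" and J: "J \<subseteq> {..<n}" "card J = k"
  shows "submatrix M I J = mat k k (\<lambda>(i,j). M $$ (pick I i, pick J j))"
proof -
  have "{i. i < dim_row M \<and> i \<in> I} = I" "{j. j < dim_col M \<and> j \<in> J} = J" using M I J by auto
  then show ?thesis unfolding submatrix_def using I J by simp
qed

lemma det_submatrix_eq_minor:
  assumes "M \<in> carrier_mat m n" "I \<subseteq> {..<m}" "card I = k" "J \<subseteq> {..<n}" "card J = k"
  shows "det (submatrix M I J) = minor M k (pick I) (pick J)"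
  using submatrix_eq_mat_pick[OF assms] by (simp add: minor_def)

lemma minors_norm_carrier:
  assumes "M \<in> carrier_mat m n"
  shows "minors_norm M k = Max {\<bar>det (submatrix M I J)\<bar> | I J.
    I \<subseteq> {..<m} \<and> card I = k \<and> J \<subseteq> {..<n} \<and> card J = k}"
  using assms unfolding minors_norm_def by auto

lemma finite_abs_det_submatrices:
  "finite {\<bar>det (submatrix M I J)\<bar> | I J. I \<subseteq> {..<m} \<and> card I = k \<and> J \<subseteq> {..<n} \<and> card J = k}"
proof (rule finite_subset)
  show "{\<bar>det (submatrix M I J)\<bar> | I J. I \<subseteq> {..<m} \<and> card I = k \<and> J \<subseteq> {..<n} \<and> card J = k}
    \<subseteq> (\<lambda>(I,J). \<bar>det (submatrix M I J)\<bar>) ` (Pow {..<m} \<times> Pow {..<n})" by auto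
qed simp

lemma abs_det_submatrix_le_minors_norm:
  assumes "M \<in> carrier_mat m n" "I \<subseteq> {..<m}" "card I = k" "J \<subseteq> {..<n}" "card J = k"
  shows "\<bar>det (submatrix M I J)\<bar> \<le> minors_norm M k"
  unfolding minors_norm_carrier[OF assms(1)]
  by (rule Max_ge[OF finite_abs_det_submatrices]) (use assms in blast)

lemma minors_norm_attained:
  assumes M: "M \<in> carrier_mat m n" and "k \<le> m" "k \<le> n"
  shows "\<exists>I J. I \<subseteq> {..<m} \<and> card I = k \<and> J \<subseteq> {..<n} \<and> card J = k \<and>
    minors_norm M k = \<bar>det (submatrix M I J)\<bar>"
proof -
  have "\<bar>det (submatrix M {..<k} {..<k})\<bar> \<in>
    {\<bar>det (submatrix M I J)\<bar> | I J. I \<subseteq> {..<m} \<and> card I = k \<and> J \<subseteq> {..<n} \<and> card J = k}"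
    using assms by force
  then have "minors_norm M k \<in>
    {\<bar>det (submatrix M I J)\<bar> | I J. I \<subseteq> {..<m} \<and> card I = k \<and> J \<subseteq> {..<n} \<and> card J = k}"
    unfolding minors_norm_carrier[OF M] by (intro Max_in[OF finite_abs_det_submatrices]) auto
  then show ?thesis by blast
qed

lemma exists_permutes_pick_image:
  assumes g: "inj_on g {..<k}"
  shows "\<exists>p. p permutes {0..<k} \<and> (\<forall>i<k. g i = pick (g ` {..<k}) (p i))"
proof -
  let ?I = "g ` {..<k}"
  define p where "p i = (if i < k then card {a \<in> ?I. a < g i} else i)" for i
  have cI: "card ?I = k" using g by (simp add: card_image)
  have pk: "p i < k" if "i < k" for i
  proof -
    have "{a \<in> ?I. a < g i} \<subset> ?I" using that by auto
    then have "card {a \<in> ?I. a < g i} < card ?I" by (intro psubset_card_mono) auto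
    then show ?thesis using that cI by (simp add: p_def)
  qed
  have pg: "pick ?I (p i) = g i" if "i < k" for i
    using pick_card_in_set[of "g i" ?I] that by (simp add: p_def)
  have pinj: "inj_on p {0..<k}"
    by (rule inj_onI) (metis atLeastLessThan_iff g inj_on_def lessThan_iff pg)
  have "p ` {0..<k} = {0..<k}"
    by (rule endo_inj_surj[OF _ _ pinj]) (use pk in auto)
  then have "p permutes {0..<k}"
    using pinj by (intro bij_imp_permutes) (auto simp: bij_betw_def p_def)
  then show ?thesis using pg by auto
qed

lemma abs_det_permute_rows_cols:
  fixes A :: "real mat"
  assumes A: "A \<in> carrier_mat k k" and p: "p permutes {0..<k}" and q: "q permutes {0..<k}"
  shows "\<bar>det (mat k k (\<lambda>(i,j). A $$ (p i, q j)))\<bar> = \<bar>det A\<bar>"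
proof -
  define B where "B = mat k k (\<lambda>(i,j). A $$ (i, q j))"
  have B: "B \<in> carrier_mat k k" unfolding B_def by simp
  have qk: "j < k \<Longrightarrow> q j < k" for j using q permutes_in_image[of q "{0..<k}" j] by auto
  have pk: "i < k \<Longrightarrow> p i < k" for i using p permutes_in_image[of p "{0..<k}" i] by auto
  have "mat k k (\<lambda>(i,j). A $$ (p i, q j)) = mat k k (\<lambda>(i,j). B $$ (p i, j))"
    by (rule eq_matI) (auto simp: B_def pk)
  then have "\<bar>det (mat k k (\<lambda>(i,j). A $$ (p i, q j)))\<bar> = \<bar>det B\<bar>"
    using det_permute_rows[OF B p] by (simp add: abs_mult sign_def)
  also have "transpose_mat B = mat k k (\<lambda>(i,j). transpose_mat A $$ (q i, j))"
    by (rule eq_matI) (use A qk in \<open>auto simp: B_def\<close>)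
  then have "det (transpose_mat B) = signof q * det (transpose_mat A)"
    using det_permute_rows[of "transpose_mat A" k q] A q by simp
  then have "\<bar>det B\<bar> = \<bar>det A\<bar>" using A B by (simp add: det_transpose abs_mult sign_def)
  finally show ?thesis .
qed

lemma abs_minor_le_minors_norm:
  assumes M: "M \<in> carrier_mat m n"
    and g: "inj_on g {..<k}" "\<And>i. i < k \<Longrightarrow> g i < m"
    and f: "inj_on f {..<k}" "\<And>j. j < k \<Longrightarrow> f j < n"
  shows "\<bar>minor M k g f\<bar> \<le> minors_norm M k"
proof -
  let ?I = "g ` {..<k}" and ?J = "f ` {..<k}"
  obtain p where p: "p permutes {0..<k}" and pg: "\<And>i. i < k \<Longrightarrow> g i = pick ?I (p i)"
    using exists_permutes_pick_image[OF g(1)] by auto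
  obtain q where q: "q permutes {0..<k}" and qf: "\<And>j. j < k \<Longrightarrow> f j = pick ?J (q j)"
    using exists_permutes_pick_image[OF f(1)] by auto
  have I: "?I \<subseteq> {..<m}" "card ?I = k" using g by (auto simp: card_image)
  have J: "?J \<subseteq> {..<n}" "card ?J = k" using f by (auto simp: card_image)
  define D where "D = submatrix M ?I ?J"
  have D: "D = mat k k (\<lambda>(i,j). M $$ (pick ?I i, pick ?J j))"
    unfolding D_def by (rule submatrix_eq_mat_pick[OF M I J])
  have "j < k \<Longrightarrow> q j < k" for j using q permutes_in_image[of q "{0..<k}" j] by auto
  moreover have "i < k \<Longrightarrow> p i < k" for i using p permutes_in_image[of p "{0..<k}" i] by auto
  ultimately have "mat k k (\<lambda>(i,j). M $$ (g i, f j)) = mat k k (\<lambda>(i,j). D $$ (p i, q j))"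
    by (intro eq_matI) (auto simp: D pg qf)
  then have "\<bar>minor M k g f\<bar> = \<bar>det D\<bar>"
    unfolding minor_def using abs_det_permute_rows_cols[OF _ p q, of D] by (simp add: D)
  also have "\<dots> \<le> minors_norm M k"
    unfolding D_def by (rule abs_det_submatrix_le_minors_norm[OF M I J])
  finally show ?thesis .
qed

lemma coord_span_submatrix_mult:
  assumes M: "M \<in> carrier_mat m n" and I: "I \<subseteq> {..<m}" "card I = k"
    and J: "J \<subseteq> {..<n}" "card J = k" and v: "v \<in> coord_span n J"
  defines "w \<equiv> vec k (\<lambda>j. v $ pick J j)"
  shows "sup_norm v \<le> sup_norm w" and "sup_norm (submatrix M I J *\<^sub>v w) \<le> sup_norm (M *\<^sub>v v)"
proof -
  have vc: "v \<in> carrier_vec n" and v0: "\<And>j. j < n \<Longrightarrow> j \<notin> J \<Longrightarrow> v $ j = 0"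
    using v by (auto simp: coord_span_def)
  have pbJ: "bij_betw (pick J) {..<k} J" using bij_betw_pick[of J] J finite_subset by auto
  show "sup_norm v \<le> sup_norm w"
  proof (rule sup_norm_le[OF sup_norm_nonneg])
    fix c assume "c < dim_vec v"
    show "\<bar>v $ c\<bar> \<le> sup_norm w"
    proof (cases "c \<in> J")
      case True
      then obtain j where "j < k" "c = pick J j" using pbJ by (auto simp: bij_betw_def)
      then show ?thesis using abs_le_sup_norm[of j w] by (simp add: w_def)
    qed (use v0 vc \<open>c < dim_vec v\<close> sup_norm_nonneg in auto)
  qed
  show "sup_norm (submatrix M I J *\<^sub>v w) \<le> sup_norm (M *\<^sub>v v)"
  proof (rule sup_norm_le[OF sup_norm_nonneg])
    fix i assume "i < dim_vec (submatrix M I J *\<^sub>v w)"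
    then have i: "i < k" using submatrix_eq_mat_pick[OF M I J] by simp
    have pI: "pick I i < m" using pick_less[OF I(1)] I i by simp
    have "(M *\<^sub>v v) $ pick I i = (\<Sum>c<n. M $$ (pick I i, c) * v $ c)"
      using M vc pI by (simp add: scalar_prod_def lessThan_atLeast0)
    also have "\<dots> = (\<Sum>c\<in>J. M $$ (pick I i, c) * v $ c)"
      by (rule sum.mono_neutral_right) (use J v0 in auto)
    also have "\<dots> = (\<Sum>j<k. M $$ (pick I i, pick J j) * v $ pick J j)"
      by (rule sum.reindex_bij_betw[OF pbJ, symmetric])
    also have "\<dots> = (submatrix M I J *\<^sub>v w) $ i"
      using i by (simp add: submatrix_eq_mat_pick[OF M I J] w_def scalar_prod_def lessThan_atLeast0)
    finally show "\<bar>(submatrix M I J *\<^sub>v w) $ i\<bar> \<le> sup_norm (M *\<^sub>v v)"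
      using abs_le_sup_norm[of "pick I i" "M *\<^sub>v v"] M pI by simp
  qed
qed

lemma abs_det_submatrix_mult_sup_norm_le:
  assumes M: "M \<in> carrier_mat m n" and I: "I \<subseteq> {..<m}" "card I = k"
    and J: "J \<subseteq> {..<n}" "card J = k" and v: "v \<in> coord_span n J" and K: "0 \<le> K"
    and cof: "\<And>i j. i < k \<Longrightarrow> j < k \<Longrightarrow> \<bar>cofactor (submatrix M I J) i j\<bar> \<le> K"
  shows "\<bar>det (submatrix M I J)\<bar> * sup_norm v \<le> real k * K * sup_norm (M *\<^sub>v v)"
proof -
  define w where "w = vec k (\<lambda>j. v $ pick J j)"
  note w = coord_span_submatrix_mult[OF M I J v, folded w_def]
  have D: "submatrix M I J \<in> carrier_mat k k" using submatrix_eq_mat_pick[OF M I J] by simp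
  have "\<bar>det (submatrix M I J)\<bar> * sup_norm v \<le> \<bar>det (submatrix M I J)\<bar> * sup_norm w"
    using w(1) by (simp add: mult_left_mono)
  also have "\<dots> \<le> real k * K * sup_norm (submatrix M I J *\<^sub>v w)"
    by (rule abs_det_mult_sup_norm_le[OF D _ cof]) (simp add: w_def)
  also have "\<dots> \<le> real k * K * sup_norm (M *\<^sub>v v)" using w(2) K by (simp add: mult_left_mono)
  finally show ?thesis .
qed

section \<open>Singular value decompositions\<close>

lemma prod_antimono_le_prod_lessThan:
  fixes L :: "nat \<Rightarrow> real"
  assumes nonneg: "\<And>i. i < n \<Longrightarrow> 0 \<le> L i" and antimono: "\<And>i j. i \<le> j \<Longrightarrow> j < n \<Longrightarrow> L j \<le> L i"
  shows "S \<subseteq> {..<n} \<Longrightarrow> card S = k \<Longrightarrow> (\<Prod>t\<in>S. L t) \<le> (\<Prod>i<k. L i)"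
proof (induction k arbitrary: S)
  case 0
  then show ?case using finite_subset[of S "{..<n}"] by simp
next
  case (Suc k S)
  have fin: "finite S" using Suc.prems(1) finite_subset by blast
  define s where "s = Max S"
  have sS: "s \<in> S" unfolding s_def using fin Suc.prems(2) by (intro Max_in) auto
  have sn: "s < n" using sS Suc.prems(1) by auto
  have "card S \<le> card {..s}" unfolding s_def using fin by (intro card_mono) auto
  then have ks: "k \<le> s" using Suc.prems(2) by simp
  have "(\<Prod>t\<in>S. L t) = L s * (\<Prod>t\<in>S - {s}. L t)" using fin sS by (simp add: prod.remove)
  also have "\<dots> \<le> L k * (\<Prod>i<k. L i)"
  proof (rule mult_mono)
    show "(\<Prod>t\<in>S - {s}. L t) \<le> (\<Prod>i<k. L i)"
      using Suc.prems fin sS by (intro Suc.IH) auto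
    show "0 \<le> (\<Prod>t\<in>S - {s}. L t)" using nonneg Suc.prems(1) by (intro prod_nonneg) auto
  qed (use antimono nonneg ks sn in auto)
  also have "\<dots> = (\<Prod>i<Suc k. L i)" by (simp add: mult.commute)
  finally show ?case .
qed

lemma abs_le_of_sum_squares:
  fixes x :: "nat \<Rightarrow> real"
  assumes "r < m" "(\<Sum>i<m. x i ^ 2) = c ^ 2" "0 \<le> c"
  shows "\<bar>x r\<bar> \<le> c"
proof -
  have "x r ^ 2 \<le> (\<Sum>i<m. x i ^ 2)" using assms(1) by (intro member_le_sum) auto
  then show ?thesis using assms(2,3) by (simp add: power2_le_iff_abs_le)
qed

text \<open>Indices start at \<open>0\<close>: \<open>L i\<close> is the singular value \<open>\<Lambda>\<^sub>i\<^sub>+\<^sub>1\<close>.\<close>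

locale orthonormal_svd =
  fixes m n :: nat and M U :: "real mat" and L :: "nat \<Rightarrow> real"
  assumes M_carrier: "M \<in> carrier_mat m n" and U_carrier: "U \<in> carrier_mat n n"
    and U_orthonormal: "transpose_mat U * U = 1\<^sub>m n"
    and MU_orthogonal_cols: "\<And>i j. i < n \<Longrightarrow> j < n \<Longrightarrow>
      (\<Sum>r<m. (M * U) $$ (r, i) * (M * U) $$ (r, j)) = (if i = j then L i ^ 2 else 0)"
    and L_nonneg: "\<And>i. i < n \<Longrightarrow> 0 \<le> L i"
    and L_antimono: "\<And>i j. i \<le> j \<Longrightarrow> j < n \<Longrightarrow> L j \<le> L i"
begin

abbreviation N :: "real mat" where "N \<equiv> M * U"

lemma N_entry: "r < m \<Longrightarrow> j < n \<Longrightarrow> N $$ (r, j) = (\<Sum>t<n. U $$ (t, j) * M $$ (r, t))"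
  using M_carrier U_carrier by (simp add: scalar_prod_def lessThan_atLeast0 mult.commute)

lemma M_entry: "r < m \<Longrightarrow> c < n \<Longrightarrow> M $$ (r, c) = (\<Sum>t<n. U $$ (c, t) * N $$ (r, t))"
proof -
  assume r: "r < m" and c: "c < n"
  have "N * transpose_mat U = M * (U * transpose_mat U)"
    using M_carrier U_carrier by (intro assoc_mult_mat[of _ m n _ n _ n]) auto
  also have "\<dots> = M"
    using orthonormal_mat_right_inverse[OF U_carrier U_orthonormal] M_carrier by simp
  finally have NU: "N * transpose_mat U = M" .
  have "M $$ (r, c) = (N * transpose_mat U) $$ (r, c)" by (simp only: NU)
  also have "\<dots> = row N r \<bullet> col (transpose_mat U) c"
    using M_carrier U_carrier r c by (intro index_mult_mat(1)) auto
  also have "\<dots> = (\<Sum>t<n. U $$ (c, t) * N $$ (r, t))"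
    unfolding scalar_prod_def
  proof (rule sum.cong)
    show "{0..<dim_vec (col (transpose_mat U) c)} = {..<n}" using U_carrier by auto
  next
    fix t assume "t \<in> {..<n}"
    then show "row N r $ t * col (transpose_mat U) c $ t = U $$ (c, t) * N $$ (r, t)"
      using M_carrier U_carrier r c by (simp add: mult.commute)
  qed
  finally show ?thesis .
qed

lemma abs_U_le_1: "i < n \<Longrightarrow> j < n \<Longrightarrow> \<bar>U $$ (i, j)\<bar> \<le> 1"
proof -
  assume i: "i < n" and j: "j < n"
  have "(\<Sum>r<n. U $$ (r, j) ^ 2) = 1 ^ 2"
    using orthonormal_col_scalar_prod[OF U_carrier U_orthonormal j j] U_carrier j
    by (simp add: scalar_prod_def lessThan_atLeast0 power2_eq_square)
  then show ?thesis using abs_le_of_sum_squares[OF i, of "\<lambda>r. U $$ (r, j)" 1] by simp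
qed

lemma abs_N_le_L: "r < m \<Longrightarrow> j < n \<Longrightarrow> \<bar>N $$ (r, j)\<bar> \<le> L j"
  using MU_orthogonal_cols[of j j] L_nonneg[of j] abs_le_of_sum_squares[of r m "\<lambda>r. N $$ (r, j)"]
  by (simp add: power2_eq_square)

lemma abs_minor_le:
  assumes k: "k \<le> n" and g: "\<And>i. i < k \<Longrightarrow> g i < m" and h: "\<And>j. j < k \<Longrightarrow> h j < n"
  shows "\<bar>minor M k g h\<bar> \<le> real n ^ k * fact k * (\<Prod>i<k. L i)"
proof -
  have "mat k k (\<lambda>(i,j). M $$ (g i, h j)) = mat k k (\<lambda>(i,j). \<Sum>t<n. U $$ (h j, t) * N $$ (g i, t))"
    using g h by (intro eq_matI) (auto simp: M_entry)
  then have "\<bar>minor M k g h\<bar> = \<bar>det (mat k k (\<lambda>(i,j). \<Sum>t<n. U $$ (h j, t) * N $$ (g i, t)))\<bar>"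
    by (simp add: minor_def)
  also have "\<dots> \<le> real n ^ k * (fact k * (\<Prod>i<k. L i))"
  proof (rule abs_det_mat_sum_cols_le)
    show "\<bar>U $$ (h j, t)\<bar> \<le> 1" if "j < k" "t < n" for j t using that h abs_U_le_1 by simp
    show "0 \<le> fact k * (\<Prod>i<k. L i)" using L_nonneg k by (intro mult_nonneg_nonneg prod_nonneg) auto
  next
    fix f assume f: "f \<in> {..<k} \<rightarrow>\<^sub>E {..<n}" and inj: "inj_on f {..<k}"
    have "\<bar>det (mat k k (\<lambda>(i,j). N $$ (g i, f j)))\<bar> \<le> fact k * (\<Prod>j<k. L (f j))"
      using abs_N_le_L g f by (intro abs_det_mat_le_fact_prod) auto
    also have "(\<Prod>j<k. L (f j)) = (\<Prod>t\<in>f ` {..<k}. L t)" using inj by (simp add: prod.reindex)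
    also have "\<dots> \<le> (\<Prod>i<k. L i)"
      using f inj by (intro prod_antimono_le_prod_lessThan[OF L_nonneg L_antimono]) (auto simp: card_image)
    finally show "\<bar>det (mat k k (\<lambda>(i,j). N $$ (g i, f j)))\<bar> \<le> fact k * (\<Prod>i<k. L i)"
      by simp
  qed
  finally show ?thesis by simp
qed

lemma exists_rows_large_det:
  assumes k: "k \<le> n" and P: "0 < (\<Prod>i<k. L i)"
  shows "\<exists>g. (\<forall>i<k. g i < m) \<and> (\<Prod>i<k. L i) \<le> real m ^ k * \<bar>det (mat k k (\<lambda>(i,j). N $$ (g i, j)))\<bar>"
proof -
  have Lpos: "0 < L i" if "i < k" for i
    using P L_nonneg[of i] that k by (metis finite_lessThan lessThan_iff order_le_less prod_zero_iff less_le_trans)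
  define W where "W r j = N $$ (r, j) / L j" for r j
  have WW: "(\<Sum>r<m. W r j * W r i) = (if i = j then 1 else 0)" if "i < k" "j < k" for i j
  proof -
    have "(\<Sum>r<m. W r j * W r i) = (\<Sum>r<m. N $$ (r, i) * N $$ (r, j)) / (L i * L j)"
      by (simp add: W_def sum_divide_distrib mult.commute)
    then show ?thesis
      using MU_orthogonal_cols[of i j] Lpos[of i] Lpos[of j] that k by (simp add: power2_eq_square)
  qed
  have W1: "\<bar>W r j\<bar> \<le> 1" if "r < m" "j < k" for r j
    using abs_N_le_L[of r j] Lpos[of j] that k by (simp add: W_def abs_divide divide_le_eq_1)
  have "det (mat k k (\<lambda>(i,j). \<Sum>r<m. W r j * W r i)) = det (1\<^sub>m k)"
    by (rule arg_cong[of _ _ det], rule eq_matI) (auto simp: WW)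
  then obtain g where g: "g \<in> {..<k} \<rightarrow>\<^sub>E {..<m}"
    and "1 \<le> real m ^ k * \<bar>det (mat k k (\<lambda>(i,j). W (g j) i))\<bar>"
    using exists_large_det_mat_sum_cols[of k m "\<lambda>j r. W r j" "\<lambda>i r. W r i"] W1 by auto
  then have Wbig: "1 \<le> real m ^ k * \<bar>det (mat k k (\<lambda>(i,j). W (g i) j))\<bar>"
    using det_mat_swap_indices[of k "\<lambda>i j. W (g i) j"] by simp
  have "mat k k (\<lambda>(i,j). N $$ (g i, j)) = mat k k (\<lambda>(i,j). W (g i) j * L j)"
    using Lpos by (intro eq_matI) (auto simp: W_def less_le)
  then have "\<bar>det (mat k k (\<lambda>(i,j). N $$ (g i, j)))\<bar> = (\<Prod>i<k. L i) * \<bar>det (mat k k (\<lambda>(i,j). W (g i) j))\<bar>"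
    using det_mat_scale_cols[of k "\<lambda>i j. W (g i) j" L] P by (simp add: abs_mult)
  then show ?thesis
    using g P mult_left_mono[OF Wbig, of "\<Prod>i<k. L i"] by (intro exI[of _ g]) (auto simp: mult_ac)
qed

lemma exists_large_minor:
  assumes k: "k \<le> n" and P: "0 < (\<Prod>i<k. L i)"
  shows "\<exists>g f. (\<forall>i<k. g i < m) \<and> (\<forall>j<k. f j < n) \<and> inj_on g {..<k} \<and> inj_on f {..<k} \<and>
    (\<Prod>i<k. L i) \<le> real m ^ k * real n ^ k * \<bar>minor M k g f\<bar>"
proof -
  obtain g where g: "\<forall>i<k. g i < m"
    and gbig: "(\<Prod>i<k. L i) \<le> real m ^ k * \<bar>det (mat k k (\<lambda>(i,j). N $$ (g i, j)))\<bar>"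
    using exists_rows_large_det[OF k P] by blast
  have "mat k k (\<lambda>(i,j). N $$ (g i, j)) = mat k k (\<lambda>(i,j). \<Sum>t<n. U $$ (t, j) * M $$ (g i, t))"
    using g k by (intro eq_matI) (auto simp: N_entry)
  with gbig P have nz: "det (mat k k (\<lambda>(i,j). \<Sum>t<n. U $$ (t, j) * M $$ (g i, t))) \<noteq> 0"
    by auto
  obtain f where f: "f \<in> {..<k} \<rightarrow>\<^sub>E {..<n}" "inj_on f {..<k}"
    and fbig: "\<bar>det (mat k k (\<lambda>(i,j). N $$ (g i, j)))\<bar> \<le> real n ^ k * \<bar>minor M k g f\<bar>"
    using exists_large_det_mat_sum_cols[OF _ nz] abs_U_le_1 k
      \<open>mat k k _ = mat k k _\<close> by (auto simp: minor_def)
  have "minor M k g f \<noteq> 0" using fbig gbig P by auto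
  then have "inj_on g {..<k}"
    using det_mat_eq_0_if_not_inj_rows[of g k "\<lambda>r j. M $$ (r, f j)"] by (auto simp: minor_def)
  moreover have "(\<Prod>i<k. L i) \<le> real m ^ k * real n ^ k * \<bar>minor M k g f\<bar>"
    using gbig mult_left_mono[OF fbig, of "real m ^ k"] by (simp add: mult_ac)
  ultimately show ?thesis using g f by blast
qed

lemma prod_le_minors_norm:
  assumes "k \<le> m" "k \<le> n"
  shows "(\<Prod>i<k. L i) \<le> real m ^ k * real n ^ k * minors_norm M k"
proof (cases "(\<Prod>i<k. L i) = 0")
  case True
  have "0 \<le> minors_norm M k" using minors_norm_attained[OF M_carrier assms] by auto
  with True show ?thesis by (simp only: mult_nonneg_nonneg zero_le_power of_nat_0_le_iff)
next
  case False
  have "0 \<le> (\<Prod>i<k. L i)" using L_nonneg assms by (intro prod_nonneg) auto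
  with False have "0 < (\<Prod>i<k. L i)" by (metis less_eq_real_def)
  then obtain g f where g: "\<forall>i<k. g i < m" "inj_on g {..<k}" and f: "\<forall>j<k. f j < n" "inj_on f {..<k}"
    and big: "(\<Prod>i<k. L i) \<le> real m ^ k * real n ^ k * \<bar>minor M k g f\<bar>"
    using exists_large_minor[OF assms(2)] by blast
  have "\<bar>minor M k g f\<bar> \<le> minors_norm M k"
    using g f by (intro abs_minor_le_minors_norm[OF M_carrier]) auto
  then have "real m ^ k * real n ^ k * \<bar>minor M k g f\<bar> \<le> real m ^ k * real n ^ k * minors_norm M k"
    by (rule mult_left_mono) simp
  with big show ?thesis by linarith
qed

lemma minors_norm_le_prod:
  assumes "k \<le> m" "k \<le> n"
  shows "minors_norm M k \<le> real n ^ k * fact k * (\<Prod>i<k. L i)"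
proof -
  obtain I J where I: "I \<subseteq> {..<m}" "card I = k" and J: "J \<subseteq> {..<n}" "card J = k"
    and eq: "minors_norm M k = \<bar>det (submatrix M I J)\<bar>"
    using minors_norm_attained[OF M_carrier assms] by blast
  show ?thesis
    unfolding eq det_submatrix_eq_minor[OF M_carrier I J]
    using pick_less[OF I(1)] pick_less[OF J(1)] I J assms by (intro abs_minor_le) auto
qed

lemma abs_cofactor_submatrix_le:
  assumes I: "I \<subseteq> {..<m}" "card I = k" and J: "J \<subseteq> {..<n}" "card J = k"
    and k: "k \<le> n" and ij: "i < k" "j < k"
  shows "\<bar>cofactor (submatrix M I J) i j\<bar> \<le> real n ^ (k - 1) * fact (k - 1) * (\<Prod>i<k - 1. L i)"
proof -
  have "\<bar>cofactor (submatrix M I J) i j\<bar> = \<bar>minor M (k - 1) (\<lambda>a. pick I (if a < i then a else Suc a))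
    (\<lambda>b. pick J (if b < j then b else Suc b))\<bar>"
    unfolding submatrix_eq_mat_pick[OF M_carrier I J] cofactor_mat_eq_minor[OF ij]
    by (simp add: abs_mult)
  also have "\<dots> \<le> real n ^ (k - 1) * fact (k - 1) * (\<Prod>i<k - 1. L i)"
  proof (rule abs_minor_le)
    fix a assume "a < k - 1"
    then have "(if a < i then a else Suc a) < card I" "(if a < j then a else Suc a) < card J"
      using I J by auto
    then show "pick I (if a < i then a else Suc a) < m" "pick J (if a < j then a else Suc a) < n"
      using pick_less[OF I(1)] pick_less[OF J(1)] by blast+
  qed (use k in simp)
  finally show ?thesis .
qed

lemma prod_lessThan_pos:
  assumes "j < n" "0 < L j"
  shows "0 < (\<Prod>i<j. L i)"
proof (rule prod_pos)
  fix i assume "i \<in> {..<j}"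
  then have "L j \<le> L i" using assms(1) by (intro L_antimono) auto
  with assms(2) show "0 < L i" by linarith
qed

lemma coord_span_lower_bound:
  assumes k: "1 \<le> k" "k \<le> m" "k \<le> n"
  shows "\<exists>J. J \<subseteq> {..<n} \<and> card J = k \<and> (\<forall>v\<in>coord_span n J.
    L (k - 1) * sup_norm v \<le> real m ^ k * real n ^ k * real n ^ (k - 1) * fact k * sup_norm (M *\<^sub>v v))"
proof -
  obtain I J where I: "I \<subseteq> {..<m}" "card I = k" and J: "J \<subseteq> {..<n}" "card J = k"
    and max: "minors_norm M k = \<bar>det (submatrix M I J)\<bar>"
    using minors_norm_attained[OF M_carrier k(2,3)] by blast
  define Q where "Q = (\<Prod>i<k - 1. L i)"
  define K where "K = real n ^ (k - 1) * fact (k - 1) * Q"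
  have PQ: "(\<Prod>i<k. L i) = Q * L (k - 1)"
    using k(1) prod.lessThan_Suc[of L "k - 1"] by (simp add: Q_def)
  have K: "0 \<le> K" unfolding K_def Q_def using L_nonneg k by (intro mult_nonneg_nonneg prod_nonneg) auto
  have Qineq: "Q * (L (k - 1) * sup_norm v) \<le>
    Q * (real m ^ k * real n ^ k * real n ^ (k - 1) * fact k * sup_norm (M *\<^sub>v v))"
    if v: "v \<in> coord_span n J" for v
  proof -
    have Qineq: "Q * (L (k - 1) * sup_norm v) \<le> real m ^ k * real n ^ k * (\<bar>det (submatrix M I J)\<bar> * sup_norm v)"
      using mult_right_mono[OF prod_le_minors_norm[OF k(2,3)] sup_norm_nonneg[of v]] PQ max
      by (simp add: mult_ac)
    also have "\<dots> \<le> real m ^ k * real n ^ k * (real k * K * sup_norm (M *\<^sub>v v))"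
      using abs_det_submatrix_mult_sup_norm_le[OF M_carrier I J v K] abs_cofactor_submatrix_le[OF I J k(3)]
      by (simp add: mult_left_mono K_def Q_def)
    also have "\<dots> = Q * (real m ^ k * real n ^ k * real n ^ (k - 1) * fact k * sup_norm (M *\<^sub>v v))"
      using k(1) fact_reduce[of k, where 'a = real] by (simp add: K_def mult_ac)
    finally show ?thesis .
  qed
  moreover have "0 \<le> real m ^ k * real n ^ k * real n ^ (k - 1) * fact k * sup_norm (M *\<^sub>v v)" for v
    using sup_norm_nonneg by (intro mult_nonneg_nonneg) simp_all
  moreover have "L (k - 1) = 0 \<or> 0 < Q"
    using L_nonneg[of "k - 1"] k prod_lessThan_pos[of "k - 1"] unfolding Q_def by force
  ultimately show ?thesis
    using J mult_le_cancel_left_pos[of Q] by (intro exI[of _ J]) (auto simp: mult.assoc)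
qed

lemma mult_vec_eq_N_mult_transpose:
  assumes x: "x \<in> carrier_vec n"
  shows "M *\<^sub>v x = N *\<^sub>v (transpose_mat U *\<^sub>v x)"
proof -
  have "N *\<^sub>v (transpose_mat U *\<^sub>v x) = M *\<^sub>v (U *\<^sub>v (transpose_mat U *\<^sub>v x))"
    using M_carrier U_carrier x by (intro assoc_mult_mat_vec) auto
  also have "U *\<^sub>v (transpose_mat U *\<^sub>v x) = (U * transpose_mat U) *\<^sub>v x"
    using U_carrier x by (intro assoc_mult_mat_vec[symmetric]) auto
  also have "\<dots> = x"
    using orthonormal_mat_right_inverse[OF U_carrier U_orthonormal] x by simp
  finally show ?thesis by simp
qed

lemma abs_transpose_U_mult_le:
  assumes x: "x \<in> carrier_vec n" and t: "t < n"
  shows "\<bar>(transpose_mat U *\<^sub>v x) $ t\<bar> \<le> real n * sup_norm x"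
proof -
  have "(transpose_mat U *\<^sub>v x) $ t = (\<Sum>i<n. U $$ (i, t) * x $ i)"
    using U_carrier x t by (simp add: scalar_prod_def lessThan_atLeast0)
  also have "\<bar>\<dots>\<bar> \<le> real (card {..<n}) * sup_norm x"
    using abs_U_le_1 t x abs_le_sup_norm[of _ x] by (intro abs_sum_mult_le) auto
  finally show ?thesis by simp
qed

lemma sup_norm_mult_le_of_perp:
  assumes k: "1 \<le> k" "k \<le> n" and x: "x \<in> carrier_vec n"
    and perp: "\<And>t. t < k - 1 \<Longrightarrow> col U t \<bullet> x = 0"
  shows "sup_norm (M *\<^sub>v x) \<le> real n * real n * L (k - 1) * sup_norm x"
proof -
  let ?y = "transpose_mat U *\<^sub>v x"
  have Lk: "0 \<le> L (k - 1)" using L_nonneg k by simp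
  have bound: "\<bar>N $$ (r, t) * ?y $ t\<bar> \<le> L (k - 1) * (real n * sup_norm x)" if "r < m" "t < n" for r t
  proof (cases "t < k - 1")
    case True
    then have "?y $ t = 0" using perp U_carrier x \<open>t < n\<close> by simp
    then show ?thesis using Lk sup_norm_nonneg[of x] by simp
  next
    case False
    then have "\<bar>N $$ (r, t)\<bar> \<le> L (k - 1)"
      using abs_N_le_L[OF that] L_antimono[of "k - 1" t] that by simp
    then show ?thesis
      unfolding abs_mult using abs_transpose_U_mult_le[OF x \<open>t < n\<close>] Lk by (intro mult_mono) auto
  qed
  have "\<bar>(M *\<^sub>v x) $ r\<bar> \<le> real n * (L (k - 1) * (real n * sup_norm x))" if r: "r < m" for r
  proof -
    have "(M *\<^sub>v x) $ r = row N r \<bullet> ?y"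
      unfolding mult_vec_eq_N_mult_transpose[OF x] using r M_carrier by (intro index_mult_mat_vec) simp
    also have "\<dots> = (\<Sum>t<n. N $$ (r, t) * ?y $ t)"
      unfolding scalar_prod_def using r M_carrier U_carrier by (intro sum.cong) (auto simp: lessThan_atLeast0)
    finally have "\<bar>(M *\<^sub>v x) $ r\<bar> \<le> (\<Sum>t<n. \<bar>N $$ (r, t) * ?y $ t\<bar>)"
      by (simp only: sum_abs)
    also have "\<dots> \<le> (\<Sum>t<n. L (k - 1) * (real n * sup_norm x))"
      by (intro sum_mono bound[OF r]) simp
    finally show ?thesis by simp
  qed
  then have "sup_norm (M *\<^sub>v x) \<le> real n * (L (k - 1) * (real n * sup_norm x))"
    using M_carrier Lk sup_norm_nonneg[of x] by (intro sup_norm_le) auto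
  then show ?thesis by (simp add: mult_ac)
qed

lemma small_singular_values_subspace:
  assumes k: "1 \<le> k" "k \<le> n"
  shows "\<exists>X. subspace_dim n (n - k + 1) X \<and>
    (\<forall>x\<in>X. sup_norm (M *\<^sub>v x) \<le> real n * real n * L (k - 1) * sup_norm x)"
proof -
  have "{k - 1..<n} \<subseteq> {..<n}" by auto
  from orthonormal_cols_span_subspace_dim[OF U_carrier U_orthonormal this]
  obtain X where X: "subspace_dim n (card {k - 1..<n}) X"
    and Xperp: "\<forall>x\<in>X. x \<in> carrier_vec n \<and> (\<forall>t<n. t \<notin> {k - 1..<n} \<longrightarrow> col U t \<bullet> x = 0)"
    by blast
  have "subspace_dim n (n - k + 1) X" using X k Suc_diff_le[OF k(2)] by simp
  moreover have "sup_norm (M *\<^sub>v x) \<le> real n * real n * L (k - 1) * sup_norm x" if "x \<in> X" for x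
    using Xperp that k by (intro sup_norm_mult_le_of_perp) auto
  ultimately show ?thesis by blast
qed

end

lemma singular_values_orthonormal_svd:
  assumes M: "M \<in> carrier_mat m n" and sv: "singular_values M ls"
  shows "\<exists>U. orthonormal_svd m n M U (\<lambda>i. ls ! i)"
proof -
  from sv have len: "length ls = n" and sorted: "sorted_wrt (\<ge>) ls" and nonneg: "\<forall>l\<in>set ls. 0 \<le> l"
    and cp: "char_poly (transpose_mat M * M) = (\<Prod>l\<leftarrow>ls. [:- (l ^ 2), 1:])"
    using M by (auto simp: singular_values_def)
  let ?G = "transpose_mat M * M"
  have G: "?G \<in> carrier_mat n n" using M by auto
  have "transpose_mat ?G = ?G" using M by (simp add: transpose_mult[of _ n m _ n])
  moreover have "char_poly ?G = (\<Prod>e\<leftarrow>map (\<lambda>l. l ^ 2) ls. [:- e, 1:])" using cp by (simp add: o_def)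
  ultimately obtain U where U: "U \<in> carrier_mat n n" "transpose_mat U * U = 1\<^sub>m n"
    and UGU: "transpose_mat U * ?G * U = mat_diag n (\<lambda>i. map (\<lambda>l. l ^ 2) ls ! i)"
    using symmetric_mat_orthonormal_diagonalization[OF G] by blast
  define N where "N = M * U"
  have N: "N \<in> carrier_mat m n" unfolding N_def using M U by simp
  have NTN: "transpose_mat N * N = mat_diag n (\<lambda>i. map (\<lambda>l. l ^ 2) ls ! i)"
    unfolding N_def UGU[symmetric] using transpose_mult_conj_mat[OF M U(1), of "1\<^sub>m m"] M U by simp
  have "(\<Sum>r<m. N $$ (r, i) * N $$ (r, j)) = (if i = j then (ls ! i) ^ 2 else 0)"
    if "i < n" "j < n" for i j
  proof -
    have "(\<Sum>r<m. N $$ (r, i) * N $$ (r, j)) = row (transpose_mat N) i \<bullet> col N j"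
      using N that by (simp add: scalar_prod_def lessThan_atLeast0)
    also have "\<dots> = (transpose_mat N * N) $$ (i, j)" using N that by simp
    finally show ?thesis unfolding NTN using that len by (simp add: mat_diag_def)
  qed
  moreover have "ls ! j \<le> ls ! i" if "i \<le> j" "j < n" for i j
    using sorted that len by (cases "i = j") (auto simp: sorted_wrt_iff_nth_less)
  ultimately have "orthonormal_svd m n M U (\<lambda>i. ls ! i)"
    using M U nonneg len unfolding N_def by unfold_locales auto
  then show ?thesis by blast
qed

definition svd_const :: "nat \<Rightarrow> nat \<Rightarrow> real" where
  "svd_const m n = real (Suc m) ^ n * real (Suc n) ^ (2 * n) * fact n"

lemma svd_const_pos: "0 < svd_const m n"
  by (simp add: svd_const_def)

lemma real_power_le_Suc_power: "k \<le> n \<Longrightarrow> real m ^ k \<le> real (Suc m) ^ n"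
  by (rule order_trans[OF power_mono power_increasing]) auto

lemma svd_const_ge:
  assumes k: "1 \<le> k" "k \<le> m" "k \<le> n"
  shows "real m ^ k * real n ^ k * real n ^ (k - 1) * fact k \<le> svd_const m n"
    and "real m ^ k * real n ^ k \<le> svd_const m n"
    and "real n ^ k * fact k \<le> svd_const m n"
proof -
  have "real n ^ k * real n ^ (k - 1) \<le> real (Suc n) ^ n * real (Suc n) ^ n"
    using k by (intro mult_mono real_power_le_Suc_power) auto
  then have "real m ^ k * (real n ^ k * real n ^ (k - 1)) * fact k \<le>
      real (Suc m) ^ n * (real (Suc n) ^ n * real (Suc n) ^ n) * fact n"
    using k by (intro mult_mono real_power_le_Suc_power fact_mono) auto
  then show big: "real m ^ k * real n ^ k * real n ^ (k - 1) * fact k \<le> svd_const m n"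
    by (simp add: svd_const_def mult_ac power_add[symmetric] mult_2 mult_2_right)
  have "1 * 1 \<le> real n ^ (k - 1) * fact k"
    using k by (intro mult_mono one_le_power) (auto simp: fact_ge_1)
  then have "real m ^ k * real n ^ k * 1 \<le> real m ^ k * real n ^ k * (real n ^ (k - 1) * fact k)"
    by (intro mult_left_mono) auto
  also have "\<dots> = real m ^ k * real n ^ k * real n ^ (k - 1) * fact k" by (simp only: mult_ac)
  finally show "real m ^ k * real n ^ k \<le> svd_const m n" using big by simp
  have "1 * 1 \<le> real m ^ k * real n ^ (k - 1)"
    using k by (intro mult_mono one_le_power) auto
  then have "1 * (real n ^ k * fact k) \<le> real m ^ k * real n ^ (k - 1) * (real n ^ k * fact k)"
    by (intro mult_right_mono) auto
  also have "\<dots> = real m ^ k * real n ^ k * real n ^ (k - 1) * fact k" by (simp only: mult_ac)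
  finally show "real n ^ k * fact k \<le> svd_const m n" using big by simp
qed

context orthonormal_svd
begin

lemma minors_norm_bounds:
  assumes k: "1 \<le> k" "k \<le> m" "k \<le> n"
  shows "1 / svd_const m n * (\<Prod>i<k. L i) \<le> minors_norm M k"
    and "minors_norm M k \<le> svd_const m n * (\<Prod>i<k. L i)"
proof -
  have P: "0 \<le> (\<Prod>i<k. L i)" using L_nonneg k by (intro prod_nonneg) auto
  have mn: "0 \<le> minors_norm M k" using minors_norm_attained[OF M_carrier k(2,3)] by auto
  have "(\<Prod>i<k. L i) \<le> svd_const m n * minors_norm M k"
    using prod_le_minors_norm[OF k(2,3)] mult_right_mono[OF svd_const_ge(2)[OF k] mn] by linarith
  then show "1 / svd_const m n * (\<Prod>i<k. L i) \<le> minors_norm M k"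
    using svd_const_pos[of m n] by (simp add: field_simps)
  show "minors_norm M k \<le> svd_const m n * (\<Prod>i<k. L i)"
    using minors_norm_le_prod[OF k(2,3)] mult_right_mono[OF svd_const_ge(3)[OF k] P] by linarith
qed

lemma coord_span_lower_bound_uniform:
  assumes k: "1 \<le> k" "k \<le> m" "k \<le> n"
  shows "\<exists>J. J \<subseteq> {..<n} \<and> card J = k \<and>
    (\<forall>v\<in>coord_span n J. 1 / svd_const m n * sup_norm v * L (k - 1) \<le> sup_norm (M *\<^sub>v v))"
proof -
  obtain J where J: "J \<subseteq> {..<n}" "card J = k" and bound: "\<And>v. v \<in> coord_span n J \<Longrightarrow>
    L (k - 1) * sup_norm v \<le> real m ^ k * real n ^ k * real n ^ (k - 1) * fact k * sup_norm (M *\<^sub>v v)"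
    using coord_span_lower_bound[OF k] by blast
  have "L (k - 1) * sup_norm v \<le> svd_const m n * sup_norm (M *\<^sub>v v)" if "v \<in> coord_span n J" for v
    using bound[OF that] mult_right_mono[OF svd_const_ge(1)[OF k] sup_norm_nonneg[of "M *\<^sub>v v"]] by linarith
  then show ?thesis
    using J svd_const_pos[of m n] by (intro exI[of _ J]) (auto simp: field_simps)
qed

lemma small_subspace_or_coord_span_lower_bound:
  assumes k: "1 \<le> k" "k \<le> m" "k \<le> n" and C: "1 \<le> C"
  shows "(\<exists>X. subspace_dim n (n - k + 1) X \<and> (\<forall>x\<in>X. sup_norm (M *\<^sub>v x) \<le> sup_norm x / C)) \<or>
    (\<exists>J. J \<subseteq> {..<n} \<and> card J = k \<and>
      (\<forall>v\<in>coord_span n J. 1 / (real (Suc n) ^ 2 * svd_const m n) / C * sup_norm v \<le> sup_norm (M *\<^sub>v v)))"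
proof (cases "real n * real n * L (k - 1) \<le> 1 / C")
  case True
  have "real n * real n * L (k - 1) * sup_norm x \<le> sup_norm x / C" for x
    using mult_right_mono[OF True sup_norm_nonneg[of x]] by simp
  then show ?thesis using small_singular_values_subspace[OF k(1,3)] by (meson order_trans)
next
  case False
  have "real n * real n \<le> real (Suc n) ^ 2" by (simp add: power2_eq_square mult_mono)
  then have "1 / C \<le> real (Suc n) ^ 2 * L (k - 1)"
    using False mult_right_mono[of "real n * real n" "real (Suc n) ^ 2" "L (k - 1)"] L_nonneg[of "k - 1"] k
    by linarith
  then have c: "1 / (real (Suc n) ^ 2 * svd_const m n) / C \<le> 1 / svd_const m n * L (k - 1)"
    using C svd_const_pos[of m n] by (simp add: field_simps)
  have weaker: "1 / (real (Suc n) ^ 2 * svd_const m n) / C * sup_norm v \<le> 1 / svd_const m n * sup_norm v * L (k - 1)"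
    for v using mult_right_mono[OF c sup_norm_nonneg[of v]] by (simp only: mult_ac)
  obtain J where "J \<subseteq> {..<n}" "card J = k"
    and "\<forall>v\<in>coord_span n J. 1 / svd_const m n * sup_norm v * L (k - 1) \<le> sup_norm (M *\<^sub>v v)"
    using coord_span_lower_bound_uniform[OF k] by blast
  then show ?thesis using weaker by (intro disjI2 exI[of _ J]) (auto intro: order_trans)
qed

end

theorem lemma3p2:
  fixes m n :: nat
  shows "\<exists>a A a' a''. a > 0 \<and> A > 0 \<and> a' > 0 \<and> a'' > 0 \<and>
    (\<forall>M ls k. M \<in> carrier_mat m n \<longrightarrow> singular_values M ls \<longrightarrow>
       1 \<le> k \<longrightarrow> k \<le> min m n \<longrightarrow>
       \<comment> \<open>(i)\<close>
       (a * (\<Prod>i<k. ls ! i) \<le> minors_norm M k \<and> minors_norm M k \<le> A * (\<Prod>i<k. ls ! i)) \<and>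
       \<comment> \<open>(ii)\<close>
       (\<exists>J. J \<subseteq> {..<n} \<and> card J = k \<and>
          (\<forall>v\<in>coord_span n J. sup_norm (M *\<^sub>v v) \<ge> a' * sup_norm v * ls ! (k - 1))) \<and>
       \<comment> \<open>(iii)\<close>
       (\<forall>C::real. C \<ge> 1 \<longrightarrow>
          (\<exists>X. subspace_dim n (n - k + 1) X \<and>
             (\<forall>x\<in>X. sup_norm (M *\<^sub>v x) \<le> sup_norm x / C)) \<or>
          (\<exists>J. J \<subseteq> {..<n} \<and> card J = k \<and>
             (\<forall>v\<in>coord_span n J. sup_norm (M *\<^sub>v v) \<ge> a'' / C * sup_norm v))))"
proof (rule exI[of _ "1 / svd_const m n"], rule exI[of _ "svd_const m n"], rule exI[of _ "1 / svd_const m n"],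
    rule exI[of _ "1 / (real (Suc n) ^ 2 * svd_const m n)"], intro conjI allI impI)
  fix M ls k
  assume M: "M \<in> carrier_mat m n" and sv: "singular_values M ls" and k: "1 \<le> k" "k \<le> min m n"
  obtain U where "orthonormal_svd m n M U (\<lambda>i. ls ! i)"
    using singular_values_orthonormal_svd[OF M sv] by blast
  then interpret orthonormal_svd m n M U "\<lambda>i. ls ! i" .
  have k': "1 \<le> k" "k \<le> m" "k \<le> n" using k by auto
  show "1 / svd_const m n * (\<Prod>i<k. ls ! i) \<le> minors_norm M k"
    and "minors_norm M k \<le> svd_const m n * (\<Prod>i<k. ls ! i)"
    using minors_norm_bounds[OF k'] by auto
  show "\<exists>J. J \<subseteq> {..<n} \<and> card J = k \<and>
      (\<forall>v\<in>coord_span n J. sup_norm (M *\<^sub>v v) \<ge> 1 / svd_const m n * sup_norm v * ls ! (k - 1))"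
    by (rule coord_span_lower_bound_uniform[OF k'])
  fix C :: real
  assume "1 \<le> C"
  then show "(\<exists>X. subspace_dim n (n - k + 1) X \<and> (\<forall>x\<in>X. sup_norm (M *\<^sub>v x) \<le> sup_norm x / C)) \<or>
    (\<exists>J. J \<subseteq> {..<n} \<and> card J = k \<and> (\<forall>v\<in>coord_span n J.
      sup_norm (M *\<^sub>v v) \<ge> 1 / (real (Suc n) ^ 2 * svd_const m n) / C * sup_norm v))"
    by (rule small_subspace_or_coord_span_lower_bound[OF k'])
qed (simp_all add: svd_const_pos)

end
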